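(* Let $(W,\mathrm d)$ and $(W_h,\mathrm d_h)$, $h>0$, be Hilbert complexes with morphisms $i_h\colon W_h\to W$ bounded uniformly in $h$. If $\Pi_h\colon W^k\to W_h^k$ is a family of bounded linear maps, bounded uniformly with respect to $h$, satisfying $\Pi_h\circ i_h^k=\mathrm{id}_{W_h^k}$, then there is a constant $C$ independent of $h$ such that for all $f\in W^k$, \[\|\Pi_hf-i_h^*f\|_h\le C\Big(\|I-J_h\|\,\|f\|+\inf_{\phi\in i_hW_h^k}\|f-\phi\|\Big).\]
   Context: A Hilbert complex $(W,\mathrm d)$ is a sequence of Hilbert spaces $W^k$ with closed densely defined linear maps $\mathrm d^k\colon V^k\subset W^k\to V^{k+1}\subset W^{k+1}$, $\mathrm d^k\circ\mathrm d^{k-1}=0$; a morphism is a sequence of bounded linear maps commuting with differentials. $\|\cdot\|$ is the $W^k$ norm, $\|\cdot\|_h$ the $W_h^k$ norm. $i_h^*\colon W^k\to W_h^k$ is the Hilbert adjoint of $i_h^k\colon W_h^k\to W^k$, $J_h=i_h^*i_h\colon W_h^k\to W_h^k$, and $\|I-J_h\|$ is its operator norm. *)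

theory Defs
  imports "HOL-Analysis.Analysis"
begin

text \<open>Spaces of a Hilbert complex are modelled as closed linear subspaces of one ambient
real Hilbert space (type of class real_inner and complete_space); degrees are natural numbers.\<close>

definition linear_on :: "'a::real_vector set \<Rightarrow> ('a \<Rightarrow> 'b::real_vector) \<Rightarrow> bool" where
  "linear_on A f \<longleftrightarrow> (\<forall>x\<in>A. \<forall>y\<in>A. f (x + y) = f x + f y) \<and> (\<forall>c. \<forall>x\<in>A. f (c *\<^sub>R x) = c *\<^sub>R f x)"

definition bounded_linear_on ::
  "'a::real_normed_vector set \<Rightarrow> 'b::real_normed_vector set \<Rightarrow> ('a \<Rightarrow> 'b) \<Rightarrow> bool" where
  "bounded_linear_on A B f \<longleftrightarrow> linear_on A f \<and> f ` A \<subseteq> B \<and> (\<exists>K. \<forall>x\<in>A. norm (f x) \<le> K * norm x)"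

definition hilbert_complex ::
  "(nat \<Rightarrow> 'a::{real_inner,complete_space} set) \<Rightarrow> (nat \<Rightarrow> 'a set) \<Rightarrow> (nat \<Rightarrow> 'a \<Rightarrow> 'a) \<Rightarrow> bool" where
  "hilbert_complex W V d \<longleftrightarrow>
     (\<forall>j. subspace (W j) \<and> closed (W j)
        \<and> subspace (V j) \<and> V j \<subseteq> W j \<and> W j \<subseteq> closure (V j)
        \<and> linear_on (V j) (d j) \<and> d j ` V j \<subseteq> V (Suc j)
        \<and> closed {(x, d j x) | x. x \<in> V j}
        \<and> (\<forall>x\<in>V j. d (Suc j) (d j x) = 0))"

definition hc_morphism ::
  "(nat \<Rightarrow> 'b::{real_inner,complete_space} set) \<Rightarrow> (nat \<Rightarrow> 'b set) \<Rightarrow> (nat \<Rightarrow> 'b \<Rightarrow> 'b) \<Rightarrow>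
   (nat \<Rightarrow> 'a::{real_inner,complete_space} set) \<Rightarrow> (nat \<Rightarrow> 'a set) \<Rightarrow> (nat \<Rightarrow> 'a \<Rightarrow> 'a) \<Rightarrow>
   (nat \<Rightarrow> 'b \<Rightarrow> 'a) \<Rightarrow> bool" where
  "hc_morphism W' V' d' W V d f \<longleftrightarrow>
     (\<forall>j. bounded_linear_on (W' j) (W j) (f j) \<and> f j ` V' j \<subseteq> V j
        \<and> (\<forall>x\<in>V' j. f (Suc j) (d' j x) = d j (f j x)))"

definition hadj :: "'b::real_inner set \<Rightarrow> ('b \<Rightarrow> 'a::real_inner) \<Rightarrow> 'a \<Rightarrow> 'b" where
  "hadj U f y = (THE z. z \<in> U \<and> (\<forall>x\<in>U. inner (f x) y = inner x z))"

definition opnorm_on :: "'a::real_normed_vector set \<Rightarrow> ('a \<Rightarrow> 'b::real_normed_vector) \<Rightarrow> real" where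
  "opnorm_on U T = Sup {norm (T x) | x. x \<in> U \<and> norm x \<le> 1}"

end

theory Submission
  imports Defs
begin

text \<open>For \<open>\<phi> = i\<^sub>h x\<close> in the discrete space, \<open>\<Pi>\<^sub>h i\<^sub>h = id\<close> gives
  \<open>\<Pi>\<^sub>h f - i\<^sub>h\<^sup>* f = (\<Pi>\<^sub>h - i\<^sub>h\<^sup>*)(f - \<phi>) + (I - J\<^sub>h) x\<close>.
  The first term is bounded by the uniform bounds on \<open>\<Pi>\<^sub>h\<close> and \<open>i\<^sub>h\<close> (hence on \<open>i\<^sub>h\<^sup>*\<close>) times
  \<open>\<parallel>f - \<phi>\<parallel>\<close>; for the second, \<open>\<parallel>x\<parallel> = \<parallel>\<Pi>\<^sub>h \<phi>\<parallel> \<le> \<parallel>\<Pi>\<^sub>h\<parallel> (\<parallel>f\<parallel> + \<parallel>f - \<phi>\<parallel>)\<close> and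
  \<open>\<parallel>I - J\<^sub>h\<parallel> \<le> 1 + \<parallel>i\<^sub>h\<parallel>\<^sup>2\<close>. Taking the infimum over \<open>\<phi>\<close> gives the estimate.
  The adjoint \<open>i\<^sub>h\<^sup>*\<close> exists by the Riesz representation theorem on a closed subspace,
  obtained by minimizing the energy \<open>\<parallel>x\<parallel>\<^sup>2 - 2 L x\<close>.\<close>

locale bounded_operator_on =
  fixes U :: "'b::{real_inner,complete_space} set" and T :: "'b \<Rightarrow> 'a::real_inner" and K :: real
  assumes subspace: "subspace U" and closed: "closed U" and linear: "linear_on U T"
    and bounded: "\<And>x. x \<in> U \<Longrightarrow> norm (T x) \<le> K * norm x" and bound_nonneg: "K \<ge> 0"
begin

lemma add: "a \<in> U \<Longrightarrow> b \<in> U \<Longrightarrow> T (a + b) = T a + T b"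
  using linear by (auto simp: linear_on_def)

lemma scaleR: "a \<in> U \<Longrightarrow> T (c *\<^sub>R a) = c *\<^sub>R T a"
  using linear by (auto simp: linear_on_def)

lemma diff: "a \<in> U \<Longrightarrow> b \<in> U \<Longrightarrow> T (a - b) = T a - T b"
  using add[of "a - b" b] subspace by (simp add: subspace_diff)

lemma norm_diff_le: "a \<in> U \<Longrightarrow> b \<in> U \<Longrightarrow> norm (T a - T b) \<le> K * norm (a - b)"
  using bounded[of "a - b"] diff subspace by (simp add: subspace_diff)

end

definition quadratic_energy :: "('a::real_normed_vector \<Rightarrow> real) \<Rightarrow> 'a \<Rightarrow> real" where
  "quadratic_energy L x = (norm x)\<^sup>2 - 2 * L x"

lemma quadratic_energy_parallelogram:
  fixes a b :: "'a::real_inner"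
  assumes "L ((1/2) *\<^sub>R (a + b)) = (L a + L b) / 2"
  shows "(norm (a - b))\<^sup>2
           = 2 * (quadratic_energy L a + quadratic_energy L b) - 4 * quadratic_energy L ((1/2) *\<^sub>R (a + b))"
proof -
  have "(norm ((1/2) *\<^sub>R (a + b)))\<^sup>2 = (norm (a + b))\<^sup>2 / 4"
    by (simp add: power_divide)
  moreover have "(norm (a - b))\<^sup>2 + (norm (a + b))\<^sup>2 = 2 * (norm a)\<^sup>2 + 2 * (norm b)\<^sup>2"
    by (simp add: power2_norm_eq_inner inner_add inner_diff inner_commute)
  ultimately show ?thesis using assms unfolding quadratic_energy_def by (simp add: algebra_simps)
qed

lemma linear_coeff_zero_if_quadratic_nonneg:
  fixes c s :: real
  assumes "s \<ge> 0" and "\<And>t. 0 \<le> 2 * t * c + t\<^sup>2 * s"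
  shows "c = 0"
proof (rule ccontr)
  assume "c \<noteq> 0"
  define t where "t = - c / (s + 1)"
  have ts: "t * (s + 1) = - c" using assms(1) by (simp add: t_def)
  have "(s + 1)\<^sup>2 * (2 * t * c + t\<^sup>2 * s) = 2 * c * (t * (s + 1)) * (s + 1) + (t * (s + 1))\<^sup>2 * s"
    by (simp add: power2_eq_square algebra_simps)
  also have "\<dots> = - c\<^sup>2 * (s + 2)"
    unfolding ts by (simp add: power2_eq_square algebra_simps)
  also have "\<dots> < 0"
    using \<open>c \<noteq> 0\<close> assms(1) by simp
  finally show False
    using assms(2)[of t] mult_nonneg_nonneg[OF zero_le_power2[of "s + 1"]] by fastforce
qed

lemma quadratic_energy_lower_bound:
  assumes "\<bar>L x\<bar> \<le> M * norm x"
  shows "quadratic_energy L x \<ge> - M\<^sup>2"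
proof -
  have "0 \<le> (norm x - M)\<^sup>2" by simp
  then show ?thesis
    using assms unfolding quadratic_energy_def by (simp add: power2_eq_square algebra_simps)
qed

text \<open>The energy is strictly convex, so a minimizing sequence is Cauchy by the parallelogram law;
  completeness and closedness of \<open>U\<close> then provide the minimizer.\<close>
lemma quadratic_energy_minimizer_exists:
  fixes L :: "'b::{real_inner,complete_space} \<Rightarrow> real"
  assumes "bounded_operator_on U L M"
  shows "\<exists>z\<in>U. \<forall>x\<in>U. quadratic_energy L z \<le> quadratic_energy L x"
proof -
  interpret bounded_operator_on U L M by fact
  let ?Q = "quadratic_energy L"
  define m where "m = Inf (?Q ` U)"
  have U_ne: "?Q ` U \<noteq> {}" using subspace_0[OF subspace] by blast
  have bdd: "bdd_below (?Q ` U)"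
  proof (rule bdd_belowI2)
    fix x assume "x \<in> U"
    then show "- M\<^sup>2 \<le> ?Q x" using bounded by (intro quadratic_energy_lower_bound) simp
  qed
  have m_le: "m \<le> ?Q x" if "x \<in> U" for x
    unfolding m_def using bdd that by (simp add: cInf_lower)
  have "m \<in> closure (?Q ` U)" unfolding m_def by (rule closure_contains_Inf[OF U_ne bdd])
  then have "\<exists>y. (\<forall>n. y n \<in> ?Q ` U) \<and> y \<longlonglongrightarrow> m" by (simp only: closure_sequential)
  then obtain y where y: "\<forall>n. y n \<in> ?Q ` U" and "y \<longlonglongrightarrow> m" by iprover
  from y have "\<forall>n. \<exists>x. x \<in> U \<and> ?Q x = y n" by (simp add: image_iff Bex_def eq_commute)
  then obtain xs where xs: "\<forall>n. xs n \<in> U \<and> ?Q (xs n) = y n" by (rule choice[THEN exE])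
  with \<open>y \<longlonglongrightarrow> m\<close> have xsU: "\<And>n. xs n \<in> U" and Q_xs: "(\<lambda>n. ?Q (xs n)) \<longlonglongrightarrow> m" by simp_all
  have close: "(norm (a - b))\<^sup>2 \<le> 2 * (?Q a - m) + 2 * (?Q b - m)" if "a \<in> U" "b \<in> U" for a b
  proof -
    have "(1/2) *\<^sub>R (a + b) \<in> U" using that subspace by (simp add: subspace_add subspace_scale)
    moreover have "L ((1/2) *\<^sub>R (a + b)) = (L a + L b) / 2"
      using that subspace by (simp add: scaleR add subspace_add)
    ultimately show ?thesis using quadratic_energy_parallelogram m_le by fastforce
  qed
  have "Cauchy xs"
  proof (rule metric_CauchyI)
    fix e :: real assume e: "e > 0"
    have "eventually (\<lambda>n. ?Q (xs n) < m + e\<^sup>2 / 4) sequentially"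
      using Q_xs e by (intro order_tendstoD(2)) auto
    then obtain N where N: "\<And>n. n \<ge> N \<Longrightarrow> ?Q (xs n) < m + e\<^sup>2 / 4"
      unfolding eventually_sequentially by blast
    have "dist (xs p) (xs n) < e" if "p \<ge> N" "n \<ge> N" for p n
    proof -
      have "(norm (xs p - xs n))\<^sup>2 < e\<^sup>2"
        using close[OF xsU xsU, of p n] N[OF that(1)] N[OF that(2)] by argo
      then show ?thesis using e by (simp add: dist_norm power_less_imp_less_base)
    qed
    then show "\<exists>N. \<forall>p\<ge>N. \<forall>n\<ge>N. dist (xs p) (xs n) < e" by blast
  qed
  then obtain z where lim: "xs \<longlonglongrightarrow> z" using Cauchy_convergent_iff convergent_def by blast
  have zU: "z \<in> U" using closed xsU lim closed_sequentially by blast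
  have "(\<lambda>n. L (xs n) - L z) \<longlonglongrightarrow> 0"
  proof (rule Lim_null_comparison)
    show "eventually (\<lambda>n. norm (L (xs n) - L z) \<le> M * norm (xs n - z)) sequentially"
      using norm_diff_le[OF xsU zU] by simp
    show "(\<lambda>n. M * norm (xs n - z)) \<longlonglongrightarrow> 0"
      using lim by (intro tendsto_mult_right_zero) (simp add: tendsto_norm_zero_iff LIM_zero_iff)
  qed
  then have "(\<lambda>n. ?Q (xs n)) \<longlonglongrightarrow> ?Q z"
    unfolding quadratic_energy_def by (intro tendsto_intros lim) (simp add: LIM_zero_iff)
  then have "?Q z = m" using Q_xs LIMSEQ_unique by blast
  then show ?thesis using zU m_le by auto
qed

lemma quadratic_energy_minimizer_represents:
  assumes "subspace U" and "linear_on U L" and "z \<in> U"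
    and min: "\<And>x. x \<in> U \<Longrightarrow> quadratic_energy L z \<le> quadratic_energy L x" and "x \<in> U"
  shows "L x = inner x z"
proof -
  have "0 \<le> 2 * t * (inner x z - L x) + t\<^sup>2 * (norm x)\<^sup>2" for t
  proof -
    have "z + t *\<^sub>R x \<in> U" using assms by (simp add: subspace_add subspace_scale)
    moreover have "L (z + t *\<^sub>R x) = L z + t * L x"
      using assms by (simp add: linear_on_def subspace_scale)
    ultimately show ?thesis
      using min[of "z + t *\<^sub>R x"] unfolding quadratic_energy_def
      unfolding power2_norm_eq_inner by (simp add: inner_commute algebra_simps power2_eq_square)
  qed
  then show ?thesis using linear_coeff_zero_if_quadratic_nonneg[of "(norm x)\<^sup>2"] by force
qed

theorem riesz_representation_on:
  fixes L :: "'b::{real_inner,complete_space} \<Rightarrow> real"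
  assumes "bounded_operator_on U L M"
  shows "\<exists>z\<in>U. \<forall>x\<in>U. L x = inner x z"
  using quadratic_energy_minimizer_exists[OF assms]
    quadratic_energy_minimizer_represents[OF bounded_operator_on.subspace[OF assms]
      bounded_operator_on.linear[OF assms]]
  by blast

context bounded_operator_on
begin

lemma hadj_exists_unique: "\<exists>!z. z \<in> U \<and> (\<forall>x\<in>U. inner (T x) y = inner x z)"
proof (rule ex_ex1I)
  have "bounded_operator_on U (\<lambda>x. inner (T x) y) (K * norm y)"
  proof
    show "linear_on U (\<lambda>x. inner (T x) y)"
      unfolding linear_on_def using add scaleR by (simp add: inner_add_left)
    show "norm (inner (T x) y) \<le> K * norm y * norm x" if "x \<in> U" for x
      using Cauchy_Schwarz_ineq2[of "T x" y] mult_right_mono[OF bounded[OF that] norm_ge_zero[of y]]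
      by (simp add: algebra_simps)
  qed (use subspace closed bound_nonneg in auto)
  then show "\<exists>z. z \<in> U \<and> (\<forall>x\<in>U. inner (T x) y = inner x z)"
    using riesz_representation_on by blast
next
  fix z z'
  assume z: "z \<in> U \<and> (\<forall>x\<in>U. inner (T x) y = inner x z)"
    and z': "z' \<in> U \<and> (\<forall>x\<in>U. inner (T x) y = inner x z')"
  then have "z - z' \<in> U" using subspace by (simp add: subspace_diff)
  then have "inner (z - z') z = inner (z - z') z'" using z z' by metis
  then have "inner (z - z') (z - z') = 0" by (simp add: inner_diff_right)
  then show "z = z'" by simp
qed

lemma hadj_in: "hadj U T y \<in> U"
  and inner_hadj: "x \<in> U \<Longrightarrow> inner (T x) y = inner x (hadj U T y)"
  using theI'[OF hadj_exists_unique[of y]] unfolding hadj_def by auto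

lemma hadj_eqI: "z \<in> U \<Longrightarrow> (\<And>x. x \<in> U \<Longrightarrow> inner (T x) y = inner x z) \<Longrightarrow> hadj U T y = z"
  using hadj_exists_unique[of y] hadj_in[of y] inner_hadj[of _ y] by blast

lemma hadj_add: "hadj U T (a + b) = hadj U T a + hadj U T b"
  by (rule hadj_eqI) (use hadj_in inner_hadj subspace in \<open>auto simp: subspace_add inner_add_right\<close>)

lemma hadj_scaleR: "hadj U T (c *\<^sub>R a) = c *\<^sub>R hadj U T a"
  by (rule hadj_eqI) (use hadj_in inner_hadj subspace in \<open>auto simp: subspace_scale\<close>)

lemma norm_hadj_le: "norm (hadj U T y) \<le> K * norm y"
proof -
  let ?z = "hadj U T y"
  have "norm ?z * norm ?z = inner (T ?z) y"
    using inner_hadj[OF hadj_in] by (simp add: power2_norm_eq_inner[symmetric] power2_eq_square)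
  also have "\<dots> \<le> norm (T ?z) * norm y" by (rule norm_cauchy_schwarz)
  also have "\<dots> \<le> norm ?z * (K * norm y)"
    using mult_right_mono[OF bounded[OF hadj_in] norm_ge_zero[of y]] by (simp add: algebra_simps)
  finally show ?thesis
    using bound_nonneg by (cases "?z = 0") auto
qed

end

context
  fixes U :: "'a::real_normed_vector set" and S :: "'a \<Rightarrow> 'b::real_normed_vector" and B :: real
  assumes U_subspace: "subspace U" and S_homogeneous: "\<And>c x. x \<in> U \<Longrightarrow> S (c *\<^sub>R x) = c *\<^sub>R S x"
    and S_bounded: "\<And>x. x \<in> U \<Longrightarrow> norm (S x) \<le> B * norm x" and B_nonneg: "B \<ge> 0"
begin

lemma norm_le_bound_on_unit_ball: "x \<in> U \<Longrightarrow> norm x \<le> 1 \<Longrightarrow> norm (S x) \<le> B"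
  using S_bounded[of x] mult_left_le[of "norm x" B] B_nonneg by linarith

lemma opnorm_on_le: "opnorm_on U S \<le> B"
  unfolding opnorm_on_def
proof (rule cSup_least)
  show "{norm (S x) | x. x \<in> U \<and> norm x \<le> 1} \<noteq> {}" using subspace_0[OF U_subspace] by auto
qed (auto intro: norm_le_bound_on_unit_ball)

lemma norm_le_opnorm_on_unit:
  assumes "x \<in> U" and "norm x \<le> 1"
  shows "norm (S x) \<le> opnorm_on U S"
  unfolding opnorm_on_def
proof (rule cSup_upper)
  show "norm (S x) \<in> {norm (S x) | x. x \<in> U \<and> norm x \<le> 1}" using assms by blast
  show "bdd_above {norm (S x) | x. x \<in> U \<and> norm x \<le> 1}"
    by (rule bdd_aboveI[of _ B]) (auto intro: norm_le_bound_on_unit_ball)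
qed

lemma opnorm_on_nonneg: "opnorm_on U S \<ge> 0"
  by (rule order_trans[OF norm_ge_zero norm_le_opnorm_on_unit[OF subspace_0[OF U_subspace]]]) simp

lemma norm_le_opnorm_on: "x \<in> U \<Longrightarrow> norm (S x) \<le> opnorm_on U S * norm x"
proof (cases "x = 0")
  case True
  then show "norm (S x) \<le> opnorm_on U S * norm x"
    using S_homogeneous[of x 0] subspace_0[OF U_subspace] by simp
next
  case False
  assume "x \<in> U"
  then have "norm (S ((1 / norm x) *\<^sub>R x)) \<le> opnorm_on U S"
    using U_subspace by (intro norm_le_opnorm_on_unit) (simp_all add: subspace_scale)
  then show ?thesis
    using S_homogeneous[OF \<open>x \<in> U\<close>] False by (simp add: field_simps)
qed

end

lemma infdist_lower_bound:
  fixes f :: "'a::metric_space"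
  assumes "A \<noteq> {}" and "b > 0" and "\<And>p. p \<in> A \<Longrightarrow> N \<le> a + b * dist f p"
  shows "N \<le> a + b * infdist f A"
proof -
  have "(N - a) / b \<le> infdist f A"
    unfolding infdist_notempty[OF assms(1)]
    using assms by (intro cINF_greatest) (auto simp: field_simps)
  then show ?thesis using assms(2) by (simp add: field_simps)
qed

lemma (in bounded_operator_on) opnorm_id_minus_hadj_comp:
  defines "N \<equiv> opnorm_on U (\<lambda>x. x - hadj U T (T x))"
  shows "N \<ge> 0" and "N \<le> 1 + K\<^sup>2" and "\<And>x. x \<in> U \<Longrightarrow> norm (x - hadj U T (T x)) \<le> N * norm x"
proof -
  have homogeneous: "c *\<^sub>R x - hadj U T (T (c *\<^sub>R x)) = c *\<^sub>R (x - hadj U T (T x))" if "x \<in> U" for c x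
    using that by (simp add: scaleR hadj_scaleR scaleR_diff_right)
  have norm_bound: "norm (x - hadj U T (T x)) \<le> (1 + K\<^sup>2) * norm x" if "x \<in> U" for x
  proof -
    have "norm (x - hadj U T (T x)) \<le> norm x + K * norm (T x)"
      using norm_triangle_ineq4[of x "hadj U T (T x)"] norm_hadj_le[of "T x"] by linarith
    also have "\<dots> \<le> norm x + K * (K * norm x)"
      using mult_left_mono[OF bounded[OF that] bound_nonneg] by linarith
    finally show ?thesis by (simp add: power2_eq_square algebra_simps)
  qed
  note opnorm_facts = opnorm_on_nonneg opnorm_on_le norm_le_opnorm_on
  note facts = opnorm_facts[of U "\<lambda>x. x - hadj U T (T x)" "1 + K\<^sup>2", OF subspace homogeneous norm_bound]
  show "N \<ge> 0" "N \<le> 1 + K\<^sup>2" "\<And>x. x \<in> U \<Longrightarrow> norm (x - hadj U T (T x)) \<le> N * norm x"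
    using facts unfolding N_def by simp_all
qed

locale bounded_left_inverse = bounded_operator_on U T K
  for U :: "'b::{real_inner,complete_space} set" and T :: "'b \<Rightarrow> 'a::real_inner" and K :: real +
  fixes X :: "'a set" and P :: "'a \<Rightarrow> 'b" and KP :: real
  assumes X_subspace: "subspace X" and P_linear: "linear_on X P"
    and P_bounded: "\<And>f. f \<in> X \<Longrightarrow> norm (P f) \<le> KP * norm f" and P_bound_nonneg: "KP \<ge> 0"
    and T_into: "\<And>x. x \<in> U \<Longrightarrow> T x \<in> X" and left_inverse: "\<And>x. x \<in> U \<Longrightarrow> P (T x) = x"
begin

text \<open>Split \<open>f = (f - T x) + T x\<close>; since \<open>P (T x) = x\<close>, the second part contributes exactly
  \<open>x - hadj U T (T x)\<close>.\<close>
lemma norm_left_inverse_minus_hadj_le: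
  assumes f: "f \<in> X" and x: "x \<in> U"
  shows "norm (P f - hadj U T f)
           \<le> KP * opnorm_on U (\<lambda>x. x - hadj U T (T x)) * norm f + (KP + K + (1 + K\<^sup>2) * KP) * dist f (T x)"
proof -
  let ?N = "opnorm_on U (\<lambda>x. x - hadj U T (T x))"
  define g where "g = f - T x"
  have g: "g \<in> X" unfolding g_def using f T_into[OF x] X_subspace by (simp add: subspace_diff)
  have "P f = P g + x"
    using P_linear g T_into[OF x] left_inverse[OF x] unfolding g_def linear_on_def
    by (metis diff_add_cancel)
  moreover have "hadj U T f = hadj U T g + hadj U T (T x)"
    unfolding g_def by (metis diff_add_cancel hadj_add)
  ultimately have split: "P f - hadj U T f = (P g - hadj U T g) + (x - hadj U T (T x))"
    by (simp add: algebra_simps)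
  have norm_x: "norm x \<le> KP * (norm f + norm g)"
  proof -
    have "norm x \<le> KP * norm (T x)" using P_bounded[OF T_into[OF x]] left_inverse[OF x] by simp
    also have "norm (T x) \<le> norm f + norm g"
      using norm_triangle_ineq4[of f g] by (simp add: g_def)
    finally show ?thesis using P_bound_nonneg by (simp add: mult_left_mono)
  qed
  have "norm (P f - hadj U T f) \<le> KP * norm g + K * norm g + ?N * norm x"
    unfolding split using norm_triangle_ineq[of "P g - hadj U T g" "x - hadj U T (T x)"]
      norm_triangle_ineq4[of "P g" "hadj U T g"]
      P_bounded[OF g] norm_hadj_le[of g] opnorm_id_minus_hadj_comp(3)[OF x] by linarith
  also have "?N * norm x \<le> KP * ?N * norm f + (1 + K\<^sup>2) * KP * norm g"
  proof -
    have "?N * norm x \<le> ?N * (KP * (norm f + norm g))"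
      using mult_left_mono[OF norm_x opnorm_id_minus_hadj_comp(1)] .
    also have "\<dots> \<le> KP * ?N * norm f + (1 + K\<^sup>2) * KP * norm g"
      using mult_right_mono[OF opnorm_id_minus_hadj_comp(2), of "KP * norm g"] P_bound_nonneg
      by (simp add: algebra_simps)
    finally show ?thesis .
  qed
  finally show ?thesis unfolding dist_norm g_def[symmetric] by (simp add: algebra_simps)
qed

lemma norm_left_inverse_minus_hadj_estimate:
  assumes "f \<in> X"
  shows "norm (P f - hadj U T f)
           \<le> (1 + K + (2 + K\<^sup>2) * KP) * (opnorm_on U (\<lambda>x. x - hadj U T (T x)) * norm f + infdist f (T ` U))"
proof -
  let ?N = "opnorm_on U (\<lambda>x. x - hadj U T (T x))" and ?C = "1 + K + (2 + K\<^sup>2) * KP"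
  have C_pos: "?C > 0" using bound_nonneg P_bound_nonneg by (simp add: add_pos_nonneg)
  have "norm (P f - hadj U T f) \<le> ?C * ?N * norm f + ?C * infdist f (T ` U)"
  proof (rule infdist_lower_bound)
    show "T ` U \<noteq> {}" using subspace_0[OF subspace] by blast
    fix p assume "p \<in> T ` U"
    then obtain x where x: "x \<in> U" and p: "p = T x" by blast
    have "KP * ?N * norm f \<le> ?C * ?N * norm f"
      using bound_nonneg P_bound_nonneg opnorm_id_minus_hadj_comp(1)
      by (intro mult_right_mono) (auto simp: algebra_simps)
    moreover have "(KP + K + (1 + K\<^sup>2) * KP) * dist f p \<le> ?C * dist f p"
      using P_bound_nonneg by (intro mult_right_mono) (auto simp: algebra_simps)
    ultimately show "norm (P f - hadj U T f) \<le> ?C * ?N * norm f + ?C * dist f p"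
      using norm_left_inverse_minus_hadj_le[OF assms x, folded p] by linarith
  qed (use C_pos in auto)
  then show ?thesis by (simp add: algebra_simps)
qed

end

lemma le_max_zero_mult_norm: "a \<le> K * norm x \<Longrightarrow> a \<le> max K 0 * norm x"
  by (metis max.cobounded1 mult_right_mono norm_ge_zero order_trans)

theorem mainTheorem11:
  fixes W :: "nat \<Rightarrow> 'a::{real_inner,complete_space} set"
    and V :: "nat \<Rightarrow> 'a set" and d :: "nat \<Rightarrow> 'a \<Rightarrow> 'a"
    and Wh :: "real \<Rightarrow> nat \<Rightarrow> 'b::{real_inner,complete_space} set"
    and Vh :: "real \<Rightarrow> nat \<Rightarrow> 'b set" and dh :: "real \<Rightarrow> nat \<Rightarrow> 'b \<Rightarrow> 'b"
    and i :: "real \<Rightarrow> nat \<Rightarrow> 'b \<Rightarrow> 'a"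
    and Pi_h :: "real \<Rightarrow> 'a \<Rightarrow> 'b"
    and k :: nat
  assumes W: "hilbert_complex W V d"
    and Wh: "\<And>h. h > 0 \<Longrightarrow> hilbert_complex (Wh h) (Vh h) (dh h)"
    and i_morph: "\<And>h. h > 0 \<Longrightarrow> hc_morphism (Wh h) (Vh h) (dh h) W V d (i h)"
    and i_unif: "\<And>j. \<exists>K. \<forall>h>0. \<forall>x\<in>Wh h j. norm (i h j x) \<le> K * norm x"
    and Pi_bl: "\<And>h. h > 0 \<Longrightarrow> bounded_linear_on (W k) (Wh h k) (Pi_h h)"
    and Pi_unif: "\<exists>K. \<forall>h>0. \<forall>f\<in>W k. norm (Pi_h h f) \<le> K * norm f"
    and Pi_inv: "\<And>h x. h > 0 \<Longrightarrow> x \<in> Wh h k \<Longrightarrow> Pi_h h (i h k x) = x"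
  shows "\<exists>C. \<forall>h>0. \<forall>f\<in>W k.
           norm (Pi_h h f - hadj (Wh h k) (i h k) f)
             \<le> C * (opnorm_on (Wh h k) (\<lambda>x. x - hadj (Wh h k) (i h k) (i h k x)) * norm f
                    + infdist f (i h k ` Wh h k))"
proof -
  obtain KI where KI: "\<forall>h>0. \<forall>x\<in>Wh h k. norm (i h k x) \<le> KI * norm x" using i_unif by blast
  obtain KP where KP: "\<forall>h>0. \<forall>f\<in>W k. norm (Pi_h h f) \<le> KP * norm f" using Pi_unif by blast
  have "bounded_left_inverse (Wh h k) (i h k) (max KI 0) (W k) (Pi_h h) (max KP 0)" if h: "h > 0" for h
  proof
    show "subspace (Wh h k)" "closed (Wh h k)" using Wh[OF h] by (auto simp: hilbert_complex_def)
    show "subspace (W k)" using W by (auto simp: hilbert_complex_def)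
    have "bounded_linear_on (Wh h k) (W k) (i h k)" using i_morph[OF h] by (simp add: hc_morphism_def)
    then show "linear_on (Wh h k) (i h k)" "\<And>x. x \<in> Wh h k \<Longrightarrow> i h k x \<in> W k"
      by (auto simp: bounded_linear_on_def)
    show "linear_on (W k) (Pi_h h)" using Pi_bl[OF h] by (simp add: bounded_linear_on_def)
    show "\<And>x. x \<in> Wh h k \<Longrightarrow> norm (i h k x) \<le> max KI 0 * norm x"
      "\<And>f. f \<in> W k \<Longrightarrow> norm (Pi_h h f) \<le> max KP 0 * norm f"
      using KI KP h by (auto intro: le_max_zero_mult_norm)
  qed (use Pi_inv[OF h] in auto)
  then show ?thesis
    by (blast intro: bounded_left_inverse.norm_left_inverse_minus_hadj_estimate)
qed

end
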